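(* Let $\mathbf{Y}$ be a Euclidean space, let $M,Q\subset\mathbf{Y}$ be nonempty closed sets, and let $\bar y \in M\cap Q$. Suppose that $M$ intersects $Q$ separably at $\bar y$ and that $M$ is super-regular at $\bar y$. Let $\Phi$ be a faithful approximation of the projection onto $M$ around $\bar y$. Then for every starting point $z^0 \in M$ sufficiently close to $\bar y$, the approximate alternating projection iteration \[ z^{k+1} = \Phi(z^k, y^k)\quad\text{for any } y^k \in P_Q(z^k), \qquad k=0,1,2,\ldots \] converges linearly to a point in the intersection $M\cap Q$.
   Context: For a nonempty closed set $S\subset\mathbf{Y}$, $P_S(z)$ is the (possibly multivalued) set of nearest points of $S$ to $z$. The set $M$ intersects $Q$ separably at $\bar y\in M\cap Q$ if there exists an angle $\alpha>0$ such that for any point $z\in M\setminus Q$ sufficiently close to $\bar y$ and any points $x\in P_Q(z)\setminus M$ and $z'\in P_M(x)$, the angle between the vectors $z-x$ and $z'-x$ is at least $\alpha$. The set $M$ is super-regular at $\bar y$ if, given any angle $\gamma>0$, for any points $z\in M$ and $x\notin M$ sufficiently close to $\bar y$ and any point $z'\in P_M(x)$ with $z'\neq z$, the angle between $z-z'$ and $x-z'$ is at least $\frac{\pi}{2}-\gamma$. A faithful approximation of the projection onto $M$ around $\bar y$ is a map $\Phi\colon V\times\mathbf{Y}\to M$, where $V$ is a neighborhood of $\bar y$ in $M$, such that: given any $\epsilon>0$ and angle $\alpha>0$, if points $z\in M$ and $y\notin M$ are sufficiently close to $\bar y$, then any point $\hat z\in P_M(y)$ such that the angle between $z-y$ and $\hat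 z-y$ is at least $\alpha$ satisfies $|\hat z-\Phi(z,y)|\le\epsilon|y-z|$. A sequence $(z^k)$ converges linearly to $\hat z$ if there exist constants $c\in(0,1)$ and $\rho>0$ with $|z^k-\hat z|<\rho c^k$ for all $k$. *)

theory Defs
  imports "HOL-Analysis.Analysis"
begin

definition proj_set :: "'a::euclidean_space set \<Rightarrow> 'a \<Rightarrow> 'a set" where
  "proj_set S z = {x \<in> S. \<forall>w\<in>S. dist z x \<le> dist z w}"

text \<open>Angle between two vectors (only used for nonzero vectors).\<close>
definition vec_angle :: "'a::euclidean_space \<Rightarrow> 'a \<Rightarrow> real" where
  "vec_angle u v = arccos ((u \<bullet> v) / (norm u * norm v))"

definition intersects_separably :: "'a::euclidean_space set \<Rightarrow> 'a set \<Rightarrow> 'a \<Rightarrow> bool" where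
  "intersects_separably M Q ybar \<longleftrightarrow>
     (\<exists>\<alpha>>0. \<exists>\<delta>>0. \<forall>z \<in> M - Q. dist z ybar < \<delta> \<longrightarrow>
        (\<forall>x \<in> proj_set Q z - M. \<forall>z' \<in> proj_set M x. vec_angle (z - x) (z' - x) \<ge> \<alpha>))"

definition super_regular :: "'a::euclidean_space set \<Rightarrow> 'a \<Rightarrow> bool" where
  "super_regular M ybar \<longleftrightarrow>
     (\<forall>\<gamma>>0. \<exists>\<delta>>0. \<forall>z \<in> M. \<forall>x. x \<notin> M \<longrightarrow> dist z ybar < \<delta> \<longrightarrow> dist x ybar < \<delta> \<longrightarrow>
        (\<forall>z' \<in> proj_set M x. z' \<noteq> z \<longrightarrow> vec_angle (z - z') (x - z') \<ge> pi / 2 - \<gamma>))"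

text \<open>\<open>Phi\<close> restricted to \<open>V \<times> Y\<close> is a faithful approximation of the projection onto M
  around ybar, where V is a neighborhood of ybar in M.\<close>
definition faithful_approx :: "'a::euclidean_space set \<Rightarrow> 'a set \<Rightarrow> ('a \<Rightarrow> 'a \<Rightarrow> 'a) \<Rightarrow> 'a \<Rightarrow> bool" where
  "faithful_approx M V Phi ybar \<longleftrightarrow>
     V \<subseteq> M \<and> (\<exists>e>0. M \<inter> ball ybar e \<subseteq> V) \<and>
     (\<forall>z \<in> V. \<forall>y. Phi z y \<in> M) \<and>
     (\<forall>\<epsilon>>0. \<forall>\<alpha>>0. \<exists>\<delta>>0. \<forall>z \<in> M. \<forall>y. y \<notin> M \<longrightarrow> dist z ybar < \<delta> \<longrightarrow> dist y ybar < \<delta> \<longrightarrow>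
        (\<forall>zh \<in> proj_set M y. vec_angle (z - y) (zh - y) \<ge> \<alpha> \<longrightarrow>
           norm (zh - Phi z y) \<le> \<epsilon> * norm (y - z)))"

definition converges_linearly :: "(nat \<Rightarrow> 'a::euclidean_space) \<Rightarrow> 'a \<Rightarrow> bool" where
  "converges_linearly zs zh \<longleftrightarrow>
     (\<exists>c \<rho>. 0 < c \<and> c < 1 \<and> 0 < \<rho> \<and> (\<forall>k. norm (zs k - zh) < \<rho> * c ^ k))"

end

theory Submission
  imports Defs
begin

text \<open>Near \<open>ybar\<close> every step shrinks the gap to \<open>Q\<close> by a fixed factor \<open>c < 1\<close>. For
  \<open>z \<in> M\<close>, \<open>y \<in> P\<^sub>Q z\<close> outside \<open>M\<close> and \<open>z' \<in> P\<^sub>M y\<close>, separability bounds the angle of the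
  triangle \<open>z y z'\<close> at \<open>y\<close> from below, super-regularity makes its angle at \<open>z'\<close> almost obtuse,
  hence \<open>|z' - y| \<le> (cos \<alpha> + 2 s) |z - y|\<close> with \<open>s\<close> small, and faithfulness puts \<open>\<Phi>(z, y)\<close>
  within \<open>\<epsilon> |z - y|\<close> of \<open>z'\<close>. As \<open>y\<^sub>k\<^sub>+\<^sub>1\<close> is a nearest point of \<open>Q\<close> to \<open>z\<^sub>k\<^sub>+\<^sub>1\<close>, the gaps
  \<open>|z\<^sub>k - y\<^sub>k|\<close> decay like \<open>c\<^sup>k\<close>, and so do the steps \<open>|z\<^sub>k\<^sub>+\<^sub>1 - z\<^sub>k| \<le> (1 + c) |z\<^sub>k - y\<^sub>k|\<close>.
  Hence the iterates never leave the neighbourhood where the estimates hold and converge linearly;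
  the limit lies in \<open>M\<close> and, being also the limit of the \<open>y\<^sub>k\<close>, in \<open>Q\<close>.\<close>

lemma proj_set_subset: "proj_set S z \<subseteq> S"
  unfolding proj_set_def by auto

lemma proj_set_dist_le: "y \<in> proj_set S z \<Longrightarrow> w \<in> S \<Longrightarrow> dist z y \<le> dist z w"
  unfolding proj_set_def by auto

lemma proj_set_nonempty:
  fixes S :: "'a::euclidean_space set"
  assumes "closed S" "S \<noteq> {}"
  shows "proj_set S z \<noteq> {}"
proof -
  obtain y where "y \<in> S" "\<And>w. w \<in> S \<Longrightarrow> dist z y \<le> dist z w"
    using distance_attains_inf[OF assms] by blast
  then show ?thesis unfolding proj_set_def by blast
qed

lemma proj_set_of_mem: "z \<in> S \<Longrightarrow> y \<in> proj_set S z \<Longrightarrow> y = z"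
  using proj_set_dist_le[of y S z z] by simp

lemma inner_le_cos_vec_angle:
  fixes u v :: "'a::euclidean_space"
  assumes "u \<noteq> 0" "v \<noteq> 0" "0 \<le> a" "a \<le> pi" "a \<le> vec_angle u v"
  shows "u \<bullet> v \<le> cos a * (norm u * norm v)"
proof -
  define t where "t = (u \<bullet> v) / (norm u * norm v)"
  have np: "norm u * norm v > 0" using assms by simp
  have t: "-1 \<le> t" "t \<le> 1"
    using np Cauchy_Schwarz_ineq2[of u v] unfolding t_def
    by (auto simp: abs_le_iff divide_le_eq le_divide_eq)
  have "cos (arccos t) \<le> cos a"
    using assms arccos_lbound[OF t] arccos_ubound[OF t] unfolding vec_angle_def t_def[symmetric]
    by (subst cos_mono_le_eq) auto
  then have "t \<le> cos a" using cos_arccos t by simp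
  then show ?thesis using np unfolding t_def by (simp add: divide_le_eq)
qed

lemma norm_side_le_of_cos_bounds:
  fixes z y z' :: "'a::real_inner"
  assumes shorter: "norm (z' - y) \<le> norm (z - y)"
    and at_y: "(z - y) \<bullet> (z' - y) \<le> C * (norm (z - y) * norm (z' - y))"
    and at_z': "(z - z') \<bullet> (y - z') \<le> s * (norm (z - z') * norm (y - z'))"
    and "0 \<le> s" "0 \<le> C + 2 * s"
  shows "norm (z' - y) \<le> (C + 2 * s) * norm (z - y)"
proof -
  define a b where "a = z - y" and "b = z' - y"
  \<comment> \<open>\<open>|b|\<^sup>2 = a \<bullet> b + (a - b) \<bullet> (- b)\<close>, and the two cosine bounds control the two summands.\<close>
  have "z - z' = a - b" "y - z' = - b" unfolding a_def b_def by auto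
  then have "norm b ^ 2 - a \<bullet> b \<le> s * (norm (a - b) * norm b)"
    using at_z' by (simp add: inner_diff_left inner_diff_right power2_norm_eq_inner inner_commute)
  also have "\<dots> \<le> s * ((2 * norm a) * norm b)"
    using norm_triangle_ineq4[of a b] shorter \<open>0 \<le> s\<close> unfolding a_def b_def
    by (intro mult_left_mono mult_right_mono) auto
  finally have "norm b * norm b \<le> ((C + 2 * s) * norm a) * norm b"
    using at_y unfolding a_def[symmetric] b_def[symmetric]
    by (simp add: power2_eq_square algebra_simps)
  then have "norm b \<le> (C + 2 * s) * norm a \<or> norm b = 0"
    by (metis mult_right_le_imp_le norm_ge_zero order_le_less)
  then show ?thesis unfolding a_def b_def using assms by auto
qed

lemma norm_approx_projection_le:
  fixes M :: "'a::euclidean_space set"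
  assumes "z \<in> M" "y \<notin> M" "z' \<in> proj_set M y"
    and "0 \<le> a" "a \<le> pi / 2" "a \<le> vec_angle (z - y) (z' - y)"
    and "0 \<le> s" "s \<le> pi / 2" "z' \<noteq> z \<Longrightarrow> pi / 2 - s \<le> vec_angle (z - z') (y - z')"
    and "norm (z' - w) \<le> \<epsilon> * norm (z - y)"
  shows "norm (w - y) \<le> (cos a + 2 * s + \<epsilon>) * norm (z - y)"
proof -
  have "z' \<in> M" using assms(3) proj_set_subset by blast
  have at_y: "(z - y) \<bullet> (z' - y) \<le> cos a * (norm (z - y) * norm (z' - y))"
    using assms \<open>z' \<in> M\<close> by (intro inner_le_cos_vec_angle) auto
  have at_z': "(z - z') \<bullet> (y - z') \<le> s * (norm (z - z') * norm (y - z'))"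
  proof (cases "z' = z")
    case False
    have "(z - z') \<bullet> (y - z') \<le> cos (pi / 2 - s) * (norm (z - z') * norm (y - z'))"
      using assms \<open>z' \<in> M\<close> False by (intro inner_le_cos_vec_angle) auto
    also have "\<dots> \<le> s * (norm (z - z') * norm (y - z'))"
      using sin_x_le_x[of s] \<open>0 \<le> s\<close> by (intro mult_right_mono) (auto simp: cos_diff)
    finally show ?thesis .
  qed simp
  have "norm (z' - y) \<le> norm (z - y)"
    using proj_set_dist_le[OF assms(3,1)] by (simp add: dist_norm norm_minus_commute)
  then have "norm (z' - y) \<le> (cos a + 2 * s) * norm (z - y)"
    using at_y at_z' assms(4,5,7) cos_ge_zero[of a]
    by (intro norm_side_le_of_cos_bounds) auto
  moreover have "norm (w - y) \<le> norm (w - z') + norm (z' - y)"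
    using norm_triangle_ineq[of "w - z'" "z' - y"] by simp
  ultimately show ?thesis
    using assms(10) by (simp add: norm_minus_commute algebra_simps)
qed

lemma norm_diff_le_geometric_tail:
  fixes zs :: "nat \<Rightarrow> 'a::real_normed_vector"
  assumes "0 \<le> c" "c < 1" and steps: "\<And>i. norm (zs (Suc i) - zs i) \<le> B * c ^ i"
    and "k \<le> m"
  shows "norm (zs m - zs k) \<le> B / (1 - c) * c ^ k"
proof -
  have "norm (zs m - zs k) \<le> B / (1 - c) * (c ^ k - c ^ m)"
    using \<open>k \<le> m\<close>
  proof (induction m rule: dec_induct)
    case (step m)
    have "norm (zs (Suc m) - zs k) \<le> norm (zs (Suc m) - zs m) + norm (zs m - zs k)"
      using norm_triangle_ineq[of "zs (Suc m) - zs m" "zs m - zs k"] by simp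
    also have "\<dots> \<le> B * c ^ m + B / (1 - c) * (c ^ k - c ^ m)"
      using steps step.IH by (rule add_mono)
    also have "\<dots> = B / (1 - c) * (c ^ k - c ^ Suc m)"
      using \<open>c < 1\<close> by (simp add: field_simps)
    finally show ?case .
  qed simp
  moreover have "0 \<le> B"
    using order_trans[OF norm_ge_zero steps[of 0]] by simp
  then have "0 \<le> B / (1 - c) * c ^ m"
    using assms(1,2) by simp
  ultimately show ?thesis by (simp add: algebra_simps)
qed

lemma geometric_steps_converge:
  fixes zs :: "nat \<Rightarrow> 'a::banach"
  assumes "0 \<le> c" "c < 1" and steps: "\<And>i. norm (zs (Suc i) - zs i) \<le> B * c ^ i"
  obtains zh where "zs \<longlonglongrightarrow> zh" "\<And>k. norm (zs k - zh) \<le> B / (1 - c) * c ^ k"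
proof -
  note tail = norm_diff_le_geometric_tail[OF assms]
  have "(\<lambda>k. B / (1 - c) * c ^ k) \<longlonglongrightarrow> 0"
    using assms(1,2) by (intro tendsto_mult_right_zero LIMSEQ_power_zero) auto
  have "Cauchy zs"
  proof (rule CauchyI)
    fix e :: real assume "0 < e"
    then obtain N where N: "B / (1 - c) * c ^ N < e / 2"
      using order_tendstoD(2)[OF \<open>_ \<longlonglongrightarrow> 0\<close>, of "e / 2"] by (auto simp: eventually_sequentially)
    have "norm (zs m - zs n) < e" if "N \<le> m" "N \<le> n" for m n
    proof -
      have "norm (zs m - zs n) \<le> norm (zs m - zs N) + norm (zs n - zs N)"
        using norm_triangle_ineq4[of "zs m - zs N" "zs n - zs N"] by simp
      then show ?thesis using tail[OF that(1)] tail[OF that(2)] N by linarith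
    qed
    then show "\<exists>N. \<forall>m\<ge>N. \<forall>n\<ge>N. norm (zs m - zs n) < e" by blast
  qed
  then obtain zh where lim: "zs \<longlonglongrightarrow> zh"
    using Cauchy_convergent convergent_def by blast
  have "norm (zs k - zh) \<le> B / (1 - c) * c ^ k" for k
  proof -
    have "(\<lambda>m. norm (zs m - zs k)) \<longlonglongrightarrow> norm (zh - zs k)"
      using lim by (intro tendsto_intros)
    then have "norm (zh - zs k) \<le> B / (1 - c) * c ^ k"
      by (rule LIMSEQ_le_const2) (use tail in blast)
    then show ?thesis by (simp add: norm_minus_commute)
  qed
  with lim that show thesis by blast
qed

lemma converges_linearlyI:
  assumes "0 < c" "c < 1" "\<And>k. norm (zs k - zh) \<le> A * c ^ k"
  shows "converges_linearly zs zh"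
proof -
  have "norm (zs k - zh) < (A + 1) * c ^ k" for k
    using assms(3)[of k] zero_less_power[OF \<open>0 < c\<close>, of k] by (simp add: distrib_right)
  moreover have "0 < A + 1"
    using order_trans[OF norm_ge_zero assms(3)[of 0]] by simp
  ultimately show ?thesis
    unfolding converges_linearly_def using assms(1,2) by blast
qed

lemma alternating_step_bounds:
  fixes Q :: "'a::euclidean_space set"
  assumes y: "y \<in> proj_set Q z" and y': "y' \<in> proj_set Q z'"
    and contr: "norm (z' - y) \<le> c * norm (z - y)"
  shows "norm (z' - y') \<le> c * norm (z - y)" "norm (z' - z) \<le> (1 + c) * norm (z - y)"
proof -
  have "dist z' y' \<le> dist z' y"
    using proj_set_dist_le[OF y' proj_set_subset[THEN subsetD, OF y]] .
  then show "norm (z' - y') \<le> c * norm (z - y)"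
    using contr by (simp add: dist_norm)
  have "norm (z' - z) \<le> norm (z' - y) + norm (y - z)"
    using norm_triangle_ineq[of "z' - y" "y - z"] by simp
  then show "norm (z' - z) \<le> (1 + c) * norm (z - y)"
    using contr by (simp add: norm_minus_commute algebra_simps)
qed

lemma alternating_iterates_stay_and_contract:
  fixes M Q :: "'a::euclidean_space set" and T :: "'a \<Rightarrow> 'a \<Rightarrow> 'a"
  assumes "ybar \<in> Q" "0 \<le> c" "c < 1"
    and step: "\<And>z y. z \<in> M \<Longrightarrow> dist z ybar < R \<Longrightarrow> y \<in> proj_set Q z \<Longrightarrow>
                 T z y \<in> M \<and> norm (T z y - y) \<le> c * norm (z - y)"
    and "zs 0 \<in> M" "2 * dist (zs 0) ybar < (1 - c) * R"
    and ys: "\<And>k. ys k \<in> proj_set Q (zs k)" and iter: "\<And>k. zs (Suc k) = T (zs k) (ys k)"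
  shows "zs k \<in> M \<and> dist (zs k) ybar < R \<and> norm (zs k - ys k) \<le> c ^ k * norm (zs 0 - ys 0)"
proof -
  define K where "K = (1 + c) / (1 - c)"
  define d where "d k = norm (zs k - ys k)" for k
  define P where "P k = dist (zs k) ybar + K * d k" for k
  \<comment> \<open>\<open>K\<close> solves \<open>1 + c + K * c = K\<close>, which makes the potential \<open>P\<close> nonincreasing;
    the hypothesis on \<open>zs 0\<close> is \<open>(1 + K) * dist (zs 0) ybar < R\<close>.\<close>
  have "0 \<le> K" using assms(2,3) unfolding K_def by simp
  have "d 0 \<le> dist (zs 0) ybar"
    using proj_set_dist_le[OF ys \<open>ybar \<in> Q\<close>] unfolding d_def by (simp add: dist_norm)
  then have "P 0 \<le> (1 + K) * dist (zs 0) ybar"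
    unfolding P_def using \<open>0 \<le> K\<close> by (simp add: distrib_right mult_left_mono)
  also have "\<dots> < R"
    using assms(3,6) unfolding K_def by (simp add: field_simps)
  finally have "P 0 < R" .
  have dist_le_P: "dist (zs k) ybar \<le> P k" for k
    using \<open>0 \<le> K\<close> unfolding P_def d_def by simp
  have inv: "zs k \<in> M \<and> d k \<le> c ^ k * d 0 \<and> P k \<le> P 0" for k
  proof (induction k)
    case (Suc k)
    have "dist (zs k) ybar < R"
      using dist_le_P[of k] Suc.IH \<open>P 0 < R\<close> by linarith
    then have "zs (Suc k) \<in> M" and contr: "norm (zs (Suc k) - ys k) \<le> c * d k"
      using step[OF _ _ ys] Suc.IH iter unfolding d_def by auto
    note bounds = alternating_step_bounds[OF ys ys contr[unfolded d_def]]
    have "dist (zs (Suc k)) ybar \<le> dist (zs k) ybar + (1 + c) * d k"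
      using bounds(2) dist_triangle[of "zs (Suc k)" ybar "zs k"] unfolding d_def by (simp add: dist_norm)
    moreover have "K * d (Suc k) \<le> K * c * d k"
      using bounds(1) \<open>0 \<le> K\<close> unfolding d_def by (simp add: mult_left_mono mult.assoc)
    moreover have "(1 + c) * d k + K * c * d k = K * d k"
      using assms(3) unfolding K_def by (simp add: field_simps)
    ultimately have "P (Suc k) \<le> P k"
      unfolding P_def by linarith
    moreover have "c * d k \<le> c ^ Suc k * d 0"
      using Suc.IH assms(2) by (simp add: mult_left_mono mult.assoc)
    then have "d (Suc k) \<le> c ^ Suc k * d 0"
      using bounds(1) unfolding d_def by linarith
    ultimately show ?case using Suc.IH \<open>zs (Suc k) \<in> M\<close> by simp
  qed (simp add: \<open>zs 0 \<in> M\<close>)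
  show ?thesis
    using inv[of k] dist_le_P[of k] \<open>P 0 < R\<close> unfolding d_def by auto
qed

lemma alternating_iteration_converges_linearly:
  fixes M Q :: "'a::euclidean_space set" and T :: "'a \<Rightarrow> 'a \<Rightarrow> 'a"
  assumes "closed M" "closed Q" "ybar \<in> Q" "0 < c" "c < 1" "0 < R"
    and step: "\<And>z y. z \<in> M \<Longrightarrow> dist z ybar < R \<Longrightarrow> y \<in> proj_set Q z \<Longrightarrow>
                 T z y \<in> M \<and> norm (T z y - y) \<le> c * norm (z - y)"
  shows "\<exists>\<delta>>0. \<forall>zs. zs 0 \<in> M \<longrightarrow> dist (zs 0) ybar < \<delta> \<longrightarrow>
           (\<forall>k. \<exists>y \<in> proj_set Q (zs k). zs (Suc k) = T (zs k) y) \<longrightarrow>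
           (\<exists>zh \<in> M \<inter> Q. converges_linearly zs zh)"
proof (intro exI[of _ "(1 - c) * R / 2"] conjI allI impI)
  show "0 < (1 - c) * R / 2" using assms(5,6) by simp
  fix zs :: "nat \<Rightarrow> 'a"
  assume "zs 0 \<in> M" "dist (zs 0) ybar < (1 - c) * R / 2"
    and "\<forall>k. \<exists>y \<in> proj_set Q (zs k). zs (Suc k) = T (zs k) y"
  then obtain ys where ys: "\<And>k. ys k \<in> proj_set Q (zs k)"
    and iter: "\<And>k. zs (Suc k) = T (zs k) (ys k)"
    by metis
  define d0 where "d0 = norm (zs 0 - ys 0)"
  have inv: "zs k \<in> M \<and> dist (zs k) ybar < R \<and> norm (zs k - ys k) \<le> c ^ k * d0" for k
    unfolding d0_def
    by (rule alternating_iterates_stay_and_contract[where T = T])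
      (use assms \<open>zs 0 \<in> M\<close> \<open>dist (zs 0) ybar < _\<close> ys iter in auto)
  have steps: "norm (zs (Suc k) - zs k) \<le> (1 + c) * d0 * c ^ k" for k
  proof -
    have "norm (zs (Suc k) - ys k) \<le> c * norm (zs k - ys k)"
      using step[OF _ _ ys] inv[of k] iter by auto
    then have "norm (zs (Suc k) - zs k) \<le> (1 + c) * norm (zs k - ys k)"
      by (rule alternating_step_bounds(2)[OF ys ys])
    also have "\<dots> \<le> (1 + c) * d0 * c ^ k"
      using inv[of k] assms(4) by (simp add: mult_left_mono mult.commute mult.left_commute)
    finally show ?thesis .
  qed
  obtain zh where lim: "zs \<longlonglongrightarrow> zh"
    and rate: "\<And>k. norm (zs k - zh) \<le> (1 + c) * d0 / (1 - c) * c ^ k"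
    using geometric_steps_converge[OF _ \<open>c < 1\<close> steps] \<open>0 < c\<close> by auto
  have "zh \<in> M"
    using closed_sequentially[OF \<open>closed M\<close> _ lim] inv by blast
  have "(\<lambda>k. c ^ k * d0) \<longlonglongrightarrow> 0"
    using assms(4,5) by (intro tendsto_mult_left_zero LIMSEQ_power_zero) auto
  then have "(\<lambda>k. ys k - zs k) \<longlonglongrightarrow> 0"
    by (rule Lim_null_comparison[rotated]) (use inv in \<open>auto simp: norm_minus_commute\<close>)
  then have "ys \<longlonglongrightarrow> zh" by (rule Lim_transform[OF lim])
  then have "zh \<in> Q"
    using closed_sequentially[OF \<open>closed Q\<close>] ys proj_set_subset by blast
  moreover have "converges_linearly zs zh"
    using converges_linearlyI[OF \<open>0 < c\<close> \<open>c < 1\<close> rate] .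
  ultimately show "\<exists>zh \<in> M \<inter> Q. converges_linearly zs zh"
    using \<open>zh \<in> M\<close> by blast
qed

lemma approx_alternating_step_le:
  fixes M Q V :: "'a::euclidean_space set"
  assumes "closed M" "M \<noteq> {}" "ybar \<in> Q"
    and "0 \<le> a" "a \<le> \<alpha>" "a \<le> pi / 2" "0 \<le> s" "s \<le> pi / 2" "0 \<le> \<epsilon>"
    and separable: "\<And>z x z'. z \<in> M - Q \<Longrightarrow> dist z ybar < \<delta>1 \<Longrightarrow> x \<in> proj_set Q z - M \<Longrightarrow>
       z' \<in> proj_set M x \<Longrightarrow> \<alpha> \<le> vec_angle (z - x) (z' - x)"
    and regular: "\<And>z x z'. z \<in> M \<Longrightarrow> x \<notin> M \<Longrightarrow> dist z ybar < \<delta>2 \<Longrightarrow> dist x ybar < \<delta>2 \<Longrightarrow>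
       z' \<in> proj_set M x \<Longrightarrow> z' \<noteq> z \<Longrightarrow> pi / 2 - s \<le> vec_angle (z - z') (x - z')"
    and faithful: "\<And>z y zh. z \<in> M \<Longrightarrow> y \<notin> M \<Longrightarrow> dist z ybar < \<delta>3 \<Longrightarrow> dist y ybar < \<delta>3 \<Longrightarrow>
       zh \<in> proj_set M y \<Longrightarrow> a \<le> vec_angle (z - y) (zh - y) \<Longrightarrow>
       norm (zh - Phi z y) \<le> \<epsilon> * norm (y - z)"
    and "M \<inter> ball ybar e \<subseteq> V" and Phi_in: "\<And>z y. z \<in> V \<Longrightarrow> Phi z y \<in> M"
    and "z \<in> M" "2 * dist z ybar < Min {\<delta>1, \<delta>2, \<delta>3, e}" and y: "y \<in> proj_set Q z"
  shows "(if y \<in> M then y else Phi z y) \<in> M \<and>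
    norm ((if y \<in> M then y else Phi z y) - y) \<le> (cos a + 2 * s + \<epsilon>) * norm (z - y)"
proof (cases "y \<in> M")
  case True
  then show ?thesis using assms(4-9) cos_ge_zero[of a] by simp
next
  case False
  have "z \<notin> Q" using proj_set_of_mem[OF _ y] \<open>z \<in> M\<close> False by blast
  have "dist y ybar \<le> 2 * dist z ybar"
    using proj_set_dist_le[OF y \<open>ybar \<in> Q\<close>] dist_triangle[of y ybar z] by (simp add: dist_commute)
  have near: "dist z ybar < \<delta>" "dist y ybar < \<delta>" if "\<delta> \<in> {\<delta>1, \<delta>2, \<delta>3, e}" for \<delta>
  proof -
    have "2 * dist z ybar < \<delta>" using \<open>2 * dist z ybar < _\<close> that by auto
    then show "dist z ybar < \<delta>" "dist y ybar < \<delta>"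
      using \<open>dist y ybar \<le> 2 * dist z ybar\<close> zero_le_dist[of z ybar] by linarith+
  qed
  obtain z' where z': "z' \<in> proj_set M y"
    using proj_set_nonempty[OF \<open>closed M\<close> \<open>M \<noteq> {}\<close>] by blast
  have angle_y: "a \<le> vec_angle (z - y) (z' - y)"
    using separable[of z y z'] \<open>a \<le> \<alpha>\<close> \<open>z \<in> M\<close> \<open>z \<notin> Q\<close> near y False z' by force
  have "norm (Phi z y - y) \<le> (cos a + 2 * s + \<epsilon>) * norm (z - y)"
  proof (rule norm_approx_projection_le[OF \<open>z \<in> M\<close> False z'])
    show "pi / 2 - s \<le> vec_angle (z - z') (y - z')" if "z' \<noteq> z"
      using regular[OF \<open>z \<in> M\<close> False _ _ z' that] near by (simp add: eq_commute)
    show "norm (z' - Phi z y) \<le> \<epsilon> * norm (z - y)"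
      using faithful[OF \<open>z \<in> M\<close> False _ _ z' angle_y] near by (simp add: norm_minus_commute)
  qed (use assms(4-8) angle_y in auto)
  moreover have "z \<in> V"
    using \<open>M \<inter> ball ybar e \<subseteq> V\<close> \<open>z \<in> M\<close> near(1)[of e] by (auto simp: dist_commute)
  ultimately show ?thesis
    using False Phi_in by simp
qed

lemma approx_alternating_step_contracts:
  fixes M Q V :: "'a::euclidean_space set"
  assumes "closed M" "M \<noteq> {}" "ybar \<in> Q"
    and "intersects_separably M Q ybar" "super_regular M ybar" "faithful_approx M V Phi ybar"
  obtains c R where "0 < c" "c < 1" "0 < R"
    and "\<And>z y. z \<in> M \<Longrightarrow> dist z ybar < R \<Longrightarrow> y \<in> proj_set Q z \<Longrightarrow>
           (if y \<in> M then y else Phi z y) \<in> M \<and>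
           norm ((if y \<in> M then y else Phi z y) - y) \<le> c * norm (z - y)"
proof -
  obtain \<alpha> \<delta>1 where "0 < \<alpha>" "0 < \<delta>1" and separable:
    "\<And>z x z'. z \<in> M - Q \<Longrightarrow> dist z ybar < \<delta>1 \<Longrightarrow> x \<in> proj_set Q z - M \<Longrightarrow>
       z' \<in> proj_set M x \<Longrightarrow> \<alpha> \<le> vec_angle (z - x) (z' - x)"
    using assms(4) unfolding intersects_separably_def by metis
  \<comment> \<open>The angle is capped at \<open>pi / 2\<close> to keep \<open>cos a \<ge> 0\<close>; super-regularity and faithfulness
    are invoked with tolerances \<open>s\<close> and \<open>2 s\<close> small enough that \<open>c = cos a + 4 s < 1\<close>.\<close>
  define a where "a = min \<alpha> (pi / 2)"
  have "0 < a" "a \<le> \<alpha>" "a \<le> pi / 2"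
    using \<open>0 < \<alpha>\<close> unfolding a_def by auto
  have "0 \<le> cos a" "cos a < 1"
    using \<open>0 < a\<close> \<open>a \<le> pi / 2\<close> cos_monotone_0_pi[of 0 a] by (auto intro: cos_ge_zero)
  define s where "s = (1 - cos a) / 8"
  have "0 < s" "s \<le> pi / 2" and c: "0 < cos a + 2 * s + 2 * s" "cos a + 2 * s + 2 * s < 1"
    using \<open>0 \<le> cos a\<close> \<open>cos a < 1\<close> pi_gt3 unfolding s_def by (auto simp: field_simps)
  obtain \<delta>2 where "0 < \<delta>2" and regular:
    "\<And>z x z'. z \<in> M \<Longrightarrow> x \<notin> M \<Longrightarrow> dist z ybar < \<delta>2 \<Longrightarrow> dist x ybar < \<delta>2 \<Longrightarrow>
       z' \<in> proj_set M x \<Longrightarrow> z' \<noteq> z \<Longrightarrow> pi / 2 - s \<le> vec_angle (z - z') (x - z')"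
    using assms(5) \<open>0 < s\<close> unfolding super_regular_def by metis
  obtain e where "0 < e" "M \<inter> ball ybar e \<subseteq> V" and Phi_in: "\<And>z y. z \<in> V \<Longrightarrow> Phi z y \<in> M"
    using assms(6) unfolding faithful_approx_def by blast
  obtain \<delta>3 where "0 < \<delta>3" and faithful:
    "\<And>z y zh. z \<in> M \<Longrightarrow> y \<notin> M \<Longrightarrow> dist z ybar < \<delta>3 \<Longrightarrow> dist y ybar < \<delta>3 \<Longrightarrow>
       zh \<in> proj_set M y \<Longrightarrow> a \<le> vec_angle (z - y) (zh - y) \<Longrightarrow>
       norm (zh - Phi z y) \<le> 2 * s * norm (y - z)"
    using assms(6) \<open>0 < s\<close> \<open>0 < a\<close> unfolding faithful_approx_def
    by (metis mult_pos_pos zero_less_numeral)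
  show thesis
  proof (rule that[OF c, of "Min {\<delta>1, \<delta>2, \<delta>3, e} / 2"])
    show "0 < Min {\<delta>1, \<delta>2, \<delta>3, e} / 2"
      using \<open>0 < \<delta>1\<close> \<open>0 < \<delta>2\<close> \<open>0 < \<delta>3\<close> \<open>0 < e\<close> by simp
  qed (rule approx_alternating_step_le[OF assms(1-3) _ \<open>a \<le> \<alpha>\<close> _ _ _ _ separable regular faithful
        \<open>M \<inter> ball ybar e \<subseteq> V\<close> Phi_in],
      use \<open>0 < a\<close> \<open>a \<le> pi / 2\<close> \<open>0 < s\<close> \<open>s \<le> pi / 2\<close> in auto)
qed

theorem mainTheorem3:
  fixes M Q V :: "'a::euclidean_space set" and ybar :: 'a and Phi :: "'a \<Rightarrow> 'a \<Rightarrow> 'a"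
  assumes "closed M" "M \<noteq> {}" "closed Q" "Q \<noteq> {}"
    and "ybar \<in> M \<inter> Q"
    and "intersects_separably M Q ybar"
    and "super_regular M ybar"
    and "faithful_approx M V Phi ybar"
  shows "\<exists>\<delta>>0. \<forall>zs :: nat \<Rightarrow> 'a. zs 0 \<in> M \<longrightarrow> dist (zs 0) ybar < \<delta> \<longrightarrow>
           (\<forall>k. \<exists>y \<in> proj_set Q (zs k).
                  zs (Suc k) = (if y \<in> M then y else Phi (zs k) y)) \<longrightarrow>
           (\<exists>zh \<in> M \<inter> Q. converges_linearly zs zh)"
proof -
  have "ybar \<in> Q" using assms(5) by blast
  obtain c R where "0 < c" "c < 1" "0 < R"
    and step: "\<And>z y. z \<in> M \<Longrightarrow> dist z ybar < R \<Longrightarrow> y \<in> proj_set Q z \<Longrightarrow>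
           (if y \<in> M then y else Phi z y) \<in> M \<and>
           norm ((if y \<in> M then y else Phi z y) - y) \<le> c * norm (z - y)"
    using approx_alternating_step_contracts[OF assms(1,2) \<open>ybar \<in> Q\<close> assms(6-8)] by blast
  show ?thesis
    using alternating_iteration_converges_linearly[where T = "\<lambda>z y. if y \<in> M then y else Phi z y",
        OF assms(1,3) \<open>ybar \<in> Q\<close> \<open>0 < c\<close> \<open>c < 1\<close> \<open>0 < R\<close> step] .
qed

end
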